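(* Let $m\in\mathbb{Z}_{>0}$, let $X\sim\mathrm{Unif}[1:2^m]$ and $Q\sim\mathrm{Bern}(7/8)$ be independent, and let $Y=X$ if $Q=0$, while conditionally on $\{X=x,Q=1\}$, $Y\sim\mathrm{Unif}[1:2^m]$ (independently of $x$). Consider any public discussion $W^N$ between Alice (observing $X$) and Bob (observing $Y$), after which Alice outputs $A\in\{0,1\}$ as a stochastic function of $(X,W^N)$ and Bob outputs $B\in\{0,1\}$ as a stochastic function of $(Y,W^N)$ (using private randomness). Then \[ d_{\mathrm{TV}}\Bigl(p_{A,B,W^N},\ \mathrm{Unif}\{(0,0),(1,1)\}\times p_{W^N}\Bigr)\ \ge\ \sqrt2-1-\tfrac14\approx 0.16. \]
   Context: $[a:b]=\{a,\dots,b\}$; $\mathrm{Bern}(\alpha)$ is the distribution with $p(1)=\alpha$, $p(0)=1-\alpha$; $d_{\mathrm{TV}}(p,q)=\frac12\sum|p-q|$ is total variation distance. Public discussion: Alice and Bob, each with private randomness independent of each other and of $(X,Y,Q)$, exchange public finite-valued messages $W_1,\dots,W_N$, odd-indexed produced by Alice as a stochastic function of $X$ and previous messages, even-indexed by Bob as a stochastic function of $Y$ and previous messages; $N\in\mathbb{Z}_{\ge0}$ may be random and is determined by the discussion. *)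

theory Defs
  imports "HOL-Probability.Probability"
begin

definition src_pmf :: "nat \<Rightarrow> (nat \<times> nat) pmf" where
  "src_pmf m = do {
     x \<leftarrow> pmf_of_set {1..2^m};
     q \<leftarrow> bernoulli_pmf (7/8);
     y \<leftarrow> (if q then pmf_of_set {1..2^m} else return_pmf x);
     return_pmf (x, y) }"

text \<open>A public discussion: Alice's message kernel ka (used for odd-indexed
  messages W_1, W_3, ..., i.e. 0-based positions 0,2,...), Bob's kernel kb,
  and a stopping rule st on transcripts (N is the first length at which st holds).\<close>
definition trans_prob ::
  "('x \<Rightarrow> 'w list \<Rightarrow> 'w pmf) \<Rightarrow> ('y \<Rightarrow> 'w list \<Rightarrow> 'w pmf) \<Rightarrow> ('w list \<Rightarrow> bool)
   \<Rightarrow> 'x \<Rightarrow> 'y \<Rightarrow> 'w list \<Rightarrow> real" where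
  "trans_prob ka kb st x y w =
     (if st w \<and> (\<forall>k<length w. \<not> st (take k w))
      then (\<Prod>i<length w. pmf (if even i then ka x (take i w) else kb y (take i w)) (w ! i))
      else 0)"

definition joint_ABW ::
  "(nat \<times> nat) pmf \<Rightarrow> (nat \<Rightarrow> 'w list \<Rightarrow> 'w pmf) \<Rightarrow> (nat \<Rightarrow> 'w list \<Rightarrow> 'w pmf)
   \<Rightarrow> ('w list \<Rightarrow> bool) \<Rightarrow> (nat \<Rightarrow> 'w list \<Rightarrow> bool pmf) \<Rightarrow> (nat \<Rightarrow> 'w list \<Rightarrow> bool pmf)
   \<Rightarrow> bool \<times> bool \<times> 'w list \<Rightarrow> real" where
  "joint_ABW p ka kb st oa ob = (\<lambda>(a, b, w).
     measure_pmf.expectation p (\<lambda>(x, y).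
        trans_prob ka kb st x y w * pmf (oa x w) a * pmf (ob y w) b))"

definition marg_W :: "(bool \<times> bool \<times> 'w list \<Rightarrow> real) \<Rightarrow> 'w list \<Rightarrow> real" where
  "marg_W P w = (\<Sum>a\<in>UNIV. \<Sum>b\<in>UNIV. P (a, b, w))"

definition unif_agree :: "bool \<times> bool \<Rightarrow> real" where
  "unif_agree ab = (if fst ab = snd ab then 1/2 else 0)"

definition dTV :: "('a \<Rightarrow> real) \<Rightarrow> ('a \<Rightarrow> real) \<Rightarrow> real" where
  "dTV p q = (1/2) * (\<Sum>\<^sub>\<infinity>z\<in>UNIV. \<bar>p z - q z\<bar>)"

end

theory Submission
  imports Defs "HOL-Library.Sublist"
begin

text \<open>
  With probability 7/8 the sources \<open>X\<close> and \<open>Y\<close> are independent, and then the probability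
  of a transcript \<open>w\<close> factors as \<open>\<alpha>(x, w) \<beta>(y, w)\<close> (the rectangle property of protocols):
  given \<open>W = w\<close>, the outputs \<open>A\<close> and \<open>B\<close> are independent bits. Writing \<open>p\<close>, \<open>q\<close> for their
  biases, \<open>\<surd>(pq) + \<surd>((1-p)(1-q)) \<le> 1\<close> forces the product law to be at distance at least
  \<open>\<surd>2 - 1\<close> from the uniform law on \<open>{00, 11}\<close>. The component \<open>Y = X\<close> has weight 1/8, and
  its transcript distribution has total mass at most 1 by Kraft's inequality for the
  prefix-free set of halting transcripts; hence it lowers the distance by at most 1/8, and
  \<open>7/8 (\<surd>2 - 1) - 1/8 \<ge> \<surd>2 - 5/4\<close>.
\<close>

definition path_prob :: "('w list \<Rightarrow> 'w pmf) \<Rightarrow> 'w list \<Rightarrow> real" where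
  "path_prob K w = (\<Prod>i<length w. pmf (K (take i w)) (w ! i))"

lemma path_prob_nonneg: "0 \<le> path_prob K w"
  unfolding path_prob_def by (simp add: prod_nonneg)

lemma path_prob_Nil [simp]: "path_prob K [] = 1"
  by (simp add: path_prob_def)

lemma path_prob_snoc: "path_prob K (h @ [c]) = path_prob K h * pmf (K h) c"
proof -
  have "(\<Prod>i<length h. pmf (K (take i (h @ [c]))) ((h @ [c]) ! i)) = path_prob K h"
    unfolding path_prob_def by (intro prod.cong) (auto simp: nth_append)
  then show ?thesis by (simp add: path_prob_def prod.lessThan_Suc)
qed

lemma prefix_snoc_iff_nth:
  "prefix (h @ [c]) w \<longleftrightarrow> prefix h w \<and> length h < length w \<and> w ! length h = c"
  by (auto simp: prefix_def nth_append neq_Nil_conv)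

lemma sum_pmf_le_1: "finite C \<Longrightarrow> (\<Sum>c\<in>C. pmf M c) \<le> 1"
  using measure_pmf.prob_le_1[of M C] by (simp add: measure_measure_pmf_finite)

lemma sum_path_prob_le_if_subset_singleton: "A \<subseteq> {h} \<Longrightarrow> (\<Sum>w\<in>A. path_prob K w) \<le> path_prob K h"
  using sum_mono2[of "{h}" A "path_prob K"] by (simp add: path_prob_nonneg)

lemma sum_path_prob_extensions_le:
  fixes F :: "'w list set"
  assumes "finite F" and prefix_free: "\<And>u v. u \<in> F \<Longrightarrow> v \<in> F \<Longrightarrow> prefix u v \<Longrightarrow> u = v"
    and "\<And>w. w \<in> F \<Longrightarrow> length w \<le> length h + d"
  shows "(\<Sum>w\<in>{w\<in>F. prefix h w}. path_prob K w) \<le> path_prob K h"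
  using assms(3)
proof (induction d arbitrary: h)
  case 0
  then have "{w\<in>F. prefix h w} \<subseteq> {h}" by (force simp: prefix_def)
  then show ?case by (rule sum_path_prob_le_if_subset_singleton)
next
  case (Suc d)
  show ?case
  proof (cases "h \<in> F")
    case True
    then show ?thesis using prefix_free by (intro sum_path_prob_le_if_subset_singleton) auto
  next
    case False
    define E where "E = {w\<in>F. prefix h w}"
    have "finite E" using \<open>finite F\<close> by (simp add: E_def)
    have "length h < length w" if "w \<in> E" for w
      using that False by (auto simp: E_def intro!: prefix_length_less strict_prefixI)
    then have next_eq: "{w\<in>E. w ! length h = c} = {w\<in>F. prefix (h @ [c]) w}" for c
      by (auto simp: E_def prefix_snoc_iff_nth)
    have "(\<Sum>w\<in>E. path_prob K w)
        = (\<Sum>c\<in>(\<lambda>w. w ! length h) ` E. \<Sum>w\<in>{w\<in>E. w ! length h = c}. path_prob K w)"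
      using \<open>finite E\<close> by (rule sum.image_gen)
    also have "\<dots> \<le> (\<Sum>c\<in>(\<lambda>w. w ! length h) ` E. path_prob K (h @ [c]))"
      unfolding next_eq using Suc by (intro sum_mono Suc.IH) auto
    also have "\<dots> = path_prob K h * (\<Sum>c\<in>(\<lambda>w. w ! length h) ` E. pmf (K h) c)"
      by (simp add: path_prob_snoc sum_distrib_left)
    also have "\<dots> \<le> path_prob K h"
      using \<open>finite E\<close> by (intro mult_right_le_one_le path_prob_nonneg sum_pmf_le_1 sum_nonneg) auto
    finally show ?thesis by (simp add: E_def)
  qed
qed

corollary sum_path_prob_prefix_free_le_1:
  fixes F :: "'w list set"
  assumes "finite F" "\<And>u v. u \<in> F \<Longrightarrow> v \<in> F \<Longrightarrow> prefix u v \<Longrightarrow> u = v"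
  shows "(\<Sum>w\<in>F. path_prob K w) \<le> 1"
  using sum_path_prob_extensions_le[OF assms, of "[]" "Max (length ` F)" K] assms(1) by simp

definition halts :: "('w list \<Rightarrow> bool) \<Rightarrow> 'w list \<Rightarrow> bool" where
  "halts st w \<longleftrightarrow> st w \<and> (\<forall>k<length w. \<not> st (take k w))"

lemma halts_prefix_eq:
  assumes "halts st u" "halts st v" "prefix u v"
  shows "u = v"
proof (rule ccontr)
  assume "u \<noteq> v"
  then have "length u < length v" using assms(3) by (intro prefix_length_less strict_prefixI)
  moreover have "take (length u) v = u" using assms(3) by (auto simp: prefix_def)
  ultimately show False using assms(1,2) unfolding halts_def by metis
qed

lemma trans_prob_eq_path_prob:
  "trans_prob ka kb st x y w
    = (if halts st w then path_prob (\<lambda>h. if even (length h) then ka x h else kb y h) w else 0)"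
  unfolding trans_prob_def halts_def path_prob_def by (auto intro!: prod.cong)

lemma sum_trans_prob_le_1: "finite F \<Longrightarrow> (\<Sum>w\<in>F. trans_prob ka kb st x y w) \<le> 1"
proof -
  assume "finite F"
  then have "(\<Sum>w\<in>F. trans_prob ka kb st x y w)
      = (\<Sum>w\<in>{w\<in>F. halts st w}. path_prob (\<lambda>h. if even (length h) then ka x h else kb y h) w)"
    by (simp add: trans_prob_eq_path_prob sum.inter_filter)
  also have "\<dots> \<le> 1"
    using \<open>finite F\<close> halts_prefix_eq by (intro sum_path_prob_prefix_free_le_1) auto
  finally show ?thesis .
qed

text \<open>Alice speaks at the even (0-based) positions. The halting indicator depends on the
  transcript alone, so it may be attached to either factor.\<close>

definition alice_weight ::
    "('x \<Rightarrow> 'w list \<Rightarrow> 'w pmf) \<Rightarrow> ('w list \<Rightarrow> bool) \<Rightarrow> 'x \<Rightarrow> 'w list \<Rightarrow> real" where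
  "alice_weight ka st x w =
     (if halts st w then \<Prod>i\<in>{..<length w} \<inter> {i. even i}. pmf (ka x (take i w)) (w ! i) else 0)"

definition bob_weight :: "('y \<Rightarrow> 'w list \<Rightarrow> 'w pmf) \<Rightarrow> 'y \<Rightarrow> 'w list \<Rightarrow> real" where
  "bob_weight kb y w = (\<Prod>i\<in>{..<length w} \<inter> - {i. even i}. pmf (kb y (take i w)) (w ! i))"

lemma alice_weight_nonneg: "0 \<le> alice_weight ka st x w"
  by (simp add: alice_weight_def prod_nonneg)

lemma bob_weight_nonneg: "0 \<le> bob_weight kb y w"
  by (simp add: bob_weight_def prod_nonneg)

lemma trans_prob_rectangle: "trans_prob ka kb st x y w = alice_weight ka st x w * bob_weight kb y w"
proof -
  have "(\<Prod>i<length w. pmf (if even i then ka x (take i w) else kb y (take i w)) (w ! i))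
      = (\<Prod>i<length w. if even i then pmf (ka x (take i w)) (w ! i) else pmf (kb y (take i w)) (w ! i))"
    by (intro prod.cong) auto
  also have "\<dots> = (\<Prod>i\<in>{..<length w} \<inter> {i. even i}. pmf (ka x (take i w)) (w ! i)) * bob_weight kb y w"
    unfolding bob_weight_def by (rule prod.If_cases) simp
  finally show ?thesis
    by (auto simp: trans_prob_def alice_weight_def halts_def)
qed

lemma pmf_src_pmf:
  fixes m :: nat
  defines "S \<equiv> {1..(2::nat)^m}"
  shows "pmf (src_pmf m) (x, y) =
    (if x \<in> S \<and> y \<in> S then 7/8 / (card S)\<^sup>2 + (if x = y then 1/8 / card S else 0) else 0)"
proof -
  have fin: "finite S" "S \<noteq> {}" unfolding S_def by auto
  define given_x where "given_x x' = bernoulli_pmf (7/8) \<bind>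
      (\<lambda>q. (if q then pmf_of_set S else return_pmf x') \<bind> (\<lambda>y'. return_pmf (x', y')))" for x'
  have given_x: "pmf (given_x x') (x, y) =
      (if x' = x then 7/8 * (indicator S y / card S) + 1/8 * (if x = y then 1 else 0) else 0)" for x'
  proof (cases "x' = x")
    case True
    have "pmf (pmf_of_set S \<bind> (\<lambda>y'. return_pmf (x, y'))) (x, y)
        = (\<Sum>y'\<in>S. indicator {(x, y)} (x, y')) / card S"
      using fin by (simp add: pmf_bind integral_pmf_of_set pmf_return)
    also have "(\<Sum>y'\<in>S. indicator {(x, y)} (x, y')) = (\<Sum>y'\<in>S. if y' = y then 1 else 0 :: real)"
      by (rule sum.cong) (auto simp: indicator_def)
    also have "\<dots> = indicator S y" using fin by (simp add: sum.delta' indicator_def)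
    finally show ?thesis
      using True unfolding given_x_def by (simp add: pmf_bind pmf_return indicator_def)
  next
    case False
    then show ?thesis
      unfolding given_x_def using fin by (simp add: pmf_bind pmf_return indicator_def integral_pmf_of_set)
  qed
  have "pmf (src_pmf m) (x, y) = (\<Sum>x'\<in>S. pmf (given_x x') (x, y)) / card S"
    unfolding src_pmf_def S_def[symmetric] given_x_def using fin by (simp add: pmf_bind integral_pmf_of_set)
  also have "(\<Sum>x'\<in>S. pmf (given_x x') (x, y)) = (if x \<in> S then pmf (given_x x) (x, y) else 0)"
    unfolding given_x using fin by (simp add: sum.delta')
  finally show ?thesis
    using fin by (cases "x \<in> S"; auto simp: given_x indicator_def field_simps power2_eq_square)
qed

lemma src_pmf_expectation:
  fixes m :: nat and F :: "nat \<times> nat \<Rightarrow> real"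
  defines "S \<equiv> {1..(2::nat)^m}"
  shows "measure_pmf.expectation (src_pmf m) F
    = 1/8 * ((\<Sum>x\<in>S. F (x, x)) / card S) + 7/8 * ((\<Sum>x\<in>S. \<Sum>y\<in>S. F (x, y)) / (card S * card S))"
proof -
  have fin: "finite S" "S \<noteq> {}" unfolding S_def by auto
  have pmf: "pmf (src_pmf m) (x, y) =
      (if x \<in> S \<and> y \<in> S then 7/8 / (card S)\<^sup>2 + (if x = y then 1/8 / card S else 0) else 0)" for x y
    unfolding S_def by (rule pmf_src_pmf)
  have "measure_pmf.expectation (src_pmf m) F = (\<Sum>z\<in>S \<times> S. F z * pmf (src_pmf m) z)"
  proof (rule integral_measure_pmf_real)
    show "finite (S \<times> S)" using fin by simp
    fix z assume "z \<in> set_pmf (src_pmf m)"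
    then show "z \<in> S \<times> S" using pmf[of "fst z" "snd z"] by (cases z) (auto simp: set_pmf_iff split: if_splits)
  qed
  also have "\<dots> = (\<Sum>x\<in>S. \<Sum>y\<in>S. F (x, y) * pmf (src_pmf m) (x, y))"
    by (simp add: sum.cartesian_product)
  also have "\<dots> = (\<Sum>x\<in>S. \<Sum>y\<in>S. 7/8 * (F (x, y) / (card S * card S))
      + (if y = x then 1/8 * (F (x, y) / card S) else 0))"
    by (intro sum.cong refl) (auto simp: pmf power2_eq_square field_simps)
  also have "\<dots> = 7/8 * ((\<Sum>x\<in>S. \<Sum>y\<in>S. F (x, y)) / (card S * card S))
      + 1/8 * ((\<Sum>x\<in>S. F (x, x)) / card S)"
    using fin by (simp add: sum.distrib sum_distrib_left sum_divide_distrib)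
  finally show ?thesis by simp
qed

lemma sum_pmf_bool [simp]: "pmf M False + pmf M True = 1"
proof -
  have "(\<Sum>b\<in>UNIV. pmf M b) = 1" by (rule sum_pmf_eq_1) auto
  then show ?thesis by (simp add: UNIV_bool)
qed

text \<open>\<open>P\<close> is eight times the part of the law coming from \<open>Q = 0\<close> (so \<open>Y = X\<close>); for \<open>Q = 1\<close>,
  the law of \<open>(A, B)\<close> given \<open>W = w\<close> is proportional to the product \<open>U a w * V b w\<close>.\<close>

lemma joint_ABW_src_decomposition:
  fixes ka kb :: "nat \<Rightarrow> 'w list \<Rightarrow> 'w pmf" and st :: "'w list \<Rightarrow> bool"
    and oa ob :: "nat \<Rightarrow> 'w list \<Rightarrow> bool pmf"
  obtains P :: "bool \<Rightarrow> bool \<Rightarrow> 'w list \<Rightarrow> real" and U V :: "bool \<Rightarrow> 'w list \<Rightarrow> real"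
  where "\<And>a b w. 0 \<le> P a b w" "\<And>a w. 0 \<le> U a w" "\<And>b w. 0 \<le> V b w"
    and "\<And>a b w. joint_ABW (src_pmf m) ka kb st oa ob (a, b, w) = P a b w / 8 + 7/8 * (U a w * V b w)"
    and "\<And>F. finite F \<Longrightarrow> (\<Sum>w\<in>F. \<Sum>a\<in>UNIV. \<Sum>b\<in>UNIV. P a b w) \<le> 1"
proof -
  define S where "S = {1..(2::nat)^m}"
  define c where "c = real (card S)"
  have "c > 0" by (simp add: c_def S_def)
  define K where "K x y w = trans_prob ka kb st x y w" for x y w
  define P where "P a b w = (\<Sum>x\<in>S. K x x w * pmf (oa x w) a * pmf (ob x w) b) / c" for a b w
  define U where "U a w = (\<Sum>x\<in>S. alice_weight ka st x w * pmf (oa x w) a) / c" for a w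
  define V where "V b w = (\<Sum>y\<in>S. bob_weight kb y w * pmf (ob y w) b) / c" for b w
  show ?thesis
  proof (rule that)
    show "0 \<le> P a b w" for a b w
      using \<open>c > 0\<close> by (auto simp: P_def K_def trans_prob_rectangle alice_weight_nonneg bob_weight_nonneg
          intro!: sum_nonneg divide_nonneg_pos)
    show "0 \<le> U a w" for a w
      using \<open>c > 0\<close> by (auto simp: U_def alice_weight_nonneg intro!: sum_nonneg divide_nonneg_pos)
    show "0 \<le> V b w" for b w
      using \<open>c > 0\<close> by (auto simp: V_def bob_weight_nonneg intro!: sum_nonneg divide_nonneg_pos)
    show "joint_ABW (src_pmf m) ka kb st oa ob (a, b, w) = P a b w / 8 + 7/8 * (U a w * V b w)" for a b w
    proof -
      have "(\<Sum>x\<in>S. \<Sum>y\<in>S. K x y w * pmf (oa x w) a * pmf (ob y w) b)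
          = (\<Sum>x\<in>S. alice_weight ka st x w * pmf (oa x w) a) * (\<Sum>y\<in>S. bob_weight kb y w * pmf (ob y w) b)"
        unfolding sum_product K_def trans_prob_rectangle by (simp add: ac_simps)
      also have "\<dots> = (U a w * c) * (V b w * c)"
        using \<open>c > 0\<close> by (simp add: U_def V_def)
      finally have "(\<Sum>x\<in>S. \<Sum>y\<in>S. K x y w * pmf (oa x w) a * pmf (ob y w) b) = (U a w * c) * (V b w * c)" .
      moreover have "joint_ABW (src_pmf m) ka kb st oa ob (a, b, w)
          = 1/8 * ((\<Sum>x\<in>S. K x x w * pmf (oa x w) a * pmf (ob x w) b) / c)
            + 7/8 * ((\<Sum>x\<in>S. \<Sum>y\<in>S. K x y w * pmf (oa x w) a * pmf (ob y w) b) / (c * c))"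
        unfolding joint_ABW_def S_def c_def K_def by (subst src_pmf_expectation) simp
      ultimately show ?thesis
        using \<open>c > 0\<close> by (simp add: P_def field_simps)
    qed
    show "(\<Sum>w\<in>F. \<Sum>a\<in>UNIV. \<Sum>b\<in>UNIV. P a b w) \<le> 1" if "finite F" for F
    proof -
      have "(\<Sum>w\<in>F. \<Sum>a\<in>UNIV. \<Sum>b\<in>UNIV. P a b w) = (\<Sum>x\<in>S. \<Sum>w\<in>F. K x x w) / c"
        by (simp add: P_def UNIV_bool sum_divide_distrib[symmetric] sum.distrib[symmetric]
            algebra_simps sum.swap[of _ F S] flip: distrib_left)
      also have "\<dots> \<le> (\<Sum>x\<in>S. 1) / c"
        using \<open>c > 0\<close> \<open>finite F\<close> unfolding K_def
        by (intro divide_right_mono sum_mono sum_trans_prob_le_1) auto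
      also have "\<dots> = 1" using \<open>c > 0\<close> by (simp add: c_def)
      finally show ?thesis .
    qed
  qed
qed

lemma sqrt_mult_add_sqrt_mult_compl_le_1:
  fixes p q :: real
  assumes "0 \<le> p" "p \<le> 1" "0 \<le> q" "q \<le> 1"
  shows "sqrt (p * q) + sqrt ((1 - p) * (1 - q)) \<le> 1"
proof -
  have "sqrt (p * q) \<le> (p + q) / 2" using assms by (intro arith_geo_mean_sqrt) auto
  moreover have "sqrt ((1 - p) * (1 - q)) \<le> ((1 - p) + (1 - q)) / 2"
    using assms by (intro arith_geo_mean_sqrt) auto
  ultimately show ?thesis by argo
qed

lemma sum_squares_le_if_both_small:
  fixes s t :: real
  assumes "0 \<le> s" "0 \<le> t" "s + t \<le> 1" "s \<le> sqrt 2 / 2" "t \<le> sqrt 2 / 2"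
  shows "s\<^sup>2 + t\<^sup>2 \<le> 2 - sqrt 2"
proof -
  define c where "c = sqrt 2 / 2"
  define u where "u = s + t"
  have c2: "c\<^sup>2 = 1/2" and "c < 3/4"
    using real_less_lsqrt[of "3/2" 2] by (simp_all add: c_def power_divide power2_eq_square)
  have "s\<^sup>2 + t\<^sup>2 \<le> 2 - 2 * c"
  proof (cases "u \<le> c")
    case True
    have "s\<^sup>2 + t\<^sup>2 \<le> u\<^sup>2" using assms by (simp add: u_def power2_sum)
    also have "\<dots> \<le> c\<^sup>2" using True assms by (intro power_mono) (auto simp: u_def)
    finally show ?thesis using c2 \<open>c < 3/4\<close> by linarith
  next
    case False
    have "0 \<le> (c - s) * (c - t)" using assms by (simp add: c_def)
    then have "c * u - c\<^sup>2 \<le> s * t" by (simp add: u_def algebra_simps power2_eq_square)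
    moreover have "(u - c) * (u - 1) \<le> 0" using False assms by (simp add: u_def mult_nonneg_nonpos)
    then have "u\<^sup>2 \<le> (1 + c) * u - c" by (simp add: algebra_simps power2_eq_square)
    moreover have "(1 - c) * u \<le> 1 - c" using assms \<open>c < 3/4\<close> by (simp add: u_def mult_left_le)
    moreover have "s\<^sup>2 + t\<^sup>2 = u\<^sup>2 - 2 * (s * t)" by (simp add: u_def power2_sum)
    ultimately show ?thesis using c2 by (simp add: algebra_simps)
  qed
  then show ?thesis by (simp add: c_def)
qed

text \<open>Equality holds for \<open>s = 1/\<surd>2\<close>, \<open>t = 1 - 1/\<surd>2\<close>.\<close>

lemma agreement_defect_ge:
  fixes s t :: real
  assumes "0 \<le> s" "0 \<le> t" "s + t \<le> 1"
  shows "2 * sqrt 2 - 2 \<le> \<bar>s\<^sup>2 - 1/2\<bar> + \<bar>t\<^sup>2 - 1/2\<bar> + 1 - s\<^sup>2 - t\<^sup>2"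
proof -
  define c where "c = sqrt 2 / 2"
  have c2: "c\<^sup>2 = 1/2" by (simp add: c_def power_divide)
  have "1 < sqrt (2::real)" by simp
  have one_large: "2 * sqrt 2 - 2 \<le> \<bar>s\<^sup>2 - 1/2\<bar> + \<bar>t\<^sup>2 - 1/2\<bar> + 1 - s\<^sup>2 - t\<^sup>2"
    if "0 \<le> t" "s + t \<le> 1" "c \<le> s" for s t :: real
  proof -
    have "c\<^sup>2 \<le> s\<^sup>2" using that by (intro power_mono) (auto simp: c_def)
    moreover have "t\<^sup>2 \<le> (1 - c)\<^sup>2" using that by (intro power_mono) auto
    moreover have "(1 - c)\<^sup>2 = 3/2 - sqrt 2" using c2 by (simp add: power2_diff c_def)
    ultimately have "1/2 \<le> s\<^sup>2" "t\<^sup>2 \<le> 3/2 - sqrt 2" "t\<^sup>2 \<le> 1/2"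
      using c2 \<open>1 < sqrt 2\<close> by linarith+
    then show ?thesis by (simp add: abs_of_nonneg abs_of_nonpos)
  qed
  consider "c \<le> s" | "c \<le> t" | "s \<le> c" "t \<le> c" by linarith
  then show ?thesis
  proof cases
    case 1
    then show ?thesis using one_large assms by blast
  next
    case 2
    then show ?thesis using one_large[of s t] assms by (simp add: add.commute)
  next
    case 3
    then have "s\<^sup>2 \<le> 1/2" "t\<^sup>2 \<le> 1/2"
      using power_mono[of s c 2] power_mono[of t c 2] assms c2 by auto
    moreover have "s\<^sup>2 + t\<^sup>2 \<le> 2 - sqrt 2"
      using 3 assms by (intro sum_squares_le_if_both_small) (auto simp: c_def)
    ultimately show ?thesis by (simp add: abs_of_nonpos)
  qed
qed

lemma product_agreement_defect_ge:
  fixes p q :: real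
  assumes "0 \<le> p" "p \<le> 1" "0 \<le> q" "q \<le> 1"
  shows "2 * sqrt 2 - 2 \<le> \<bar>p * q - 1/2\<bar> + \<bar>(1 - p) * (1 - q) - 1/2\<bar> + (1 - p) * q + p * (1 - q)"
proof -
  define s t where "s = sqrt (p * q)" and "t = sqrt ((1 - p) * (1 - q))"
  have "s\<^sup>2 = p * q" "t\<^sup>2 = (1 - p) * (1 - q)" "0 \<le> s" "0 \<le> t"
    using assms by (simp_all add: s_def t_def)
  moreover have "s + t \<le> 1"
    unfolding s_def t_def using assms by (rule sqrt_mult_add_sqrt_mult_compl_le_1)
  ultimately have "2 * sqrt 2 - 2
      \<le> \<bar>p * q - 1/2\<bar> + \<bar>(1 - p) * (1 - q) - 1/2\<bar> + 1 - p * q - (1 - p) * (1 - q)"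
    using agreement_defect_ge[of s t] by simp
  then show ?thesis by (simp add: algebra_simps)
qed

lemma product_far_from_agreement:
  fixes U V :: "bool \<Rightarrow> real"
  assumes "\<And>a. 0 \<le> U a" "\<And>b. 0 \<le> V b"
  defines "T \<equiv> sum U UNIV * sum V UNIV"
  shows "(2 * sqrt 2 - 2) * T \<le> (\<Sum>a\<in>UNIV. \<Sum>b\<in>UNIV. \<bar>U a * V b - unif_agree (a, b) * T\<bar>)"
proof (cases "T = 0")
  case True
  then show ?thesis by (simp add: sum_nonneg)
next
  case False
  define p q where "p = U True / sum U UNIV" and "q = V True / sum V UNIV"
  have "sum U UNIV = U False + U True" "sum V UNIV = V False + V True" by (simp_all add: UNIV_bool)
  with False assms have pos: "0 < sum U UNIV" "0 < sum V UNIV"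
    by (metis T_def add_nonneg_nonneg less_eq_real_def mult_zero_left mult_zero_right)+
  have U: "U True = p * sum U UNIV" "U False = (1 - p) * sum U UNIV"
    and V: "V True = q * sum V UNIV" "V False = (1 - q) * sum V UNIV"
    using pos by (simp_all add: p_def q_def UNIV_bool field_simps)
  have "0 \<le> p" "p \<le> 1" "0 \<le> q" "q \<le> 1"
    using pos assms by (simp_all add: p_def q_def UNIV_bool)
  then have "(2 * sqrt 2 - 2) * T
      \<le> T * (\<bar>p * q - 1/2\<bar> + \<bar>(1 - p) * (1 - q) - 1/2\<bar> + (1 - p) * q + p * (1 - q))"
    using product_agreement_defect_ge pos by (simp add: T_def mult.commute)
  also have "\<dots> = (\<Sum>a\<in>UNIV. \<Sum>b\<in>UNIV. \<bar>U a * V b - unif_agree (a, b) * T\<bar>)"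
  proof -
    have "T * (\<bar>p * q - 1/2\<bar> + \<bar>(1 - p) * (1 - q) - 1/2\<bar> + (1 - p) * q + p * (1 - q))
        = \<bar>T * (p * q - 1/2)\<bar> + \<bar>T * ((1 - p) * (1 - q) - 1/2)\<bar> + \<bar>T * ((1 - p) * q)\<bar>
          + \<bar>T * (p * (1 - q))\<bar>"
      using pos \<open>0 \<le> p\<close> \<open>p \<le> 1\<close> \<open>0 \<le> q\<close> \<open>q \<le> 1\<close>
      by (simp add: abs_mult T_def distrib_left)
    also have "\<dots> = \<bar>U True * V True - T/2\<bar> + \<bar>U False * V False - T/2\<bar> + \<bar>U False * V True\<bar>
          + \<bar>U True * V False\<bar>"
      unfolding T_def U V by (simp add: algebra_simps)
    also have "\<dots> = (\<Sum>a\<in>UNIV. \<Sum>b\<in>UNIV. \<bar>U a * V b - unif_agree (a, b) * T\<bar>)"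
      by (simp add: UNIV_bool unif_agree_def)
    finally show ?thesis .
  qed
  finally show ?thesis .
qed

lemma mixture_far_from_agreement:
  fixes P :: "bool \<Rightarrow> bool \<Rightarrow> real" and U V :: "bool \<Rightarrow> real"
  assumes "\<And>a b. 0 \<le> P a b" "\<And>a. 0 \<le> U a" "\<And>b. 0 \<le> V b"
  defines "J \<equiv> \<lambda>a b. P a b / 8 + 7/8 * (U a * V b)"
  shows "7/8 * (2 * sqrt 2 - 2) * (sum U UNIV * sum V UNIV) - 1/4 * (\<Sum>a\<in>UNIV. \<Sum>b\<in>UNIV. P a b)
    \<le> (\<Sum>a\<in>UNIV. \<Sum>b\<in>UNIV. \<bar>J a b - unif_agree (a, b) * (\<Sum>a\<in>UNIV. \<Sum>b\<in>UNIV. J a b)\<bar>)"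
proof -
  define T where "T = sum U UNIV * sum V UNIV"
  define Ptot where "Ptot = (\<Sum>a\<in>UNIV. \<Sum>b\<in>UNIV. P a b)"
  have M: "(\<Sum>a\<in>UNIV. \<Sum>b\<in>UNIV. J a b) = Ptot / 8 + 7/8 * T"
    by (simp add: J_def Ptot_def T_def UNIV_bool algebra_simps)
  have pointwise: "7/8 * \<bar>U a * V b - unif_agree (a, b) * T\<bar> - 1/8 * (P a b + unif_agree (a, b) * Ptot)
      \<le> \<bar>J a b - unif_agree (a, b) * (Ptot / 8 + 7/8 * T)\<bar>" for a b
  proof -
    have "0 \<le> unif_agree (a, b) * Ptot"
      using assms(1) by (simp add: unif_agree_def Ptot_def sum_nonneg)
    then have "\<bar>P a b - unif_agree (a, b) * Ptot\<bar> \<le> P a b + unif_agree (a, b) * Ptot"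
      using assms(1)[of a b] by linarith
    moreover have "J a b - unif_agree (a, b) * (Ptot / 8 + 7/8 * T)
        = 7/8 * (U a * V b - unif_agree (a, b) * T) + 1/8 * (P a b - unif_agree (a, b) * Ptot)"
      by (simp add: J_def algebra_simps)
    moreover have "7/8 * \<bar>x\<bar> - 1/8 * z \<le> \<bar>7/8 * x + 1/8 * y\<bar>" if "\<bar>y\<bar> \<le> z" for x y z :: real
      using that by (auto simp: abs_if split: if_splits)
    ultimately show ?thesis by presburger
  qed
  have "(2 * sqrt 2 - 2) * T \<le> (\<Sum>a\<in>UNIV. \<Sum>b\<in>UNIV. \<bar>U a * V b - unif_agree (a, b) * T\<bar>)"
    unfolding T_def by (rule product_far_from_agreement) (use assms in auto)
  then have "7/8 * (2 * sqrt 2 - 2) * T - 1/4 * Ptot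
      \<le> 7/8 * (\<Sum>a\<in>UNIV. \<Sum>b\<in>UNIV. \<bar>U a * V b - unif_agree (a, b) * T\<bar>) - 1/4 * Ptot"
    by linarith
  also have "\<dots> = (\<Sum>a\<in>UNIV. \<Sum>b\<in>UNIV. 7/8 * \<bar>U a * V b - unif_agree (a, b) * T\<bar>
      - 1/8 * (P a b + unif_agree (a, b) * Ptot))"
    by (simp add: UNIV_bool unif_agree_def Ptot_def algebra_simps)
  also have "\<dots> \<le> (\<Sum>a\<in>UNIV. \<Sum>b\<in>UNIV. \<bar>J a b - unif_agree (a, b) * (Ptot / 8 + 7/8 * T)\<bar>)"
    by (intro sum_mono pointwise)
  finally show ?thesis by (simp only: M T_def Ptot_def)
qed

lemma has_sum_Sigma_finite:
  fixes f :: "'a \<times> 'b \<Rightarrow> 'c::topological_comm_monoid_add"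
  assumes "finite A" "\<And>a. a \<in> A \<Longrightarrow> ((\<lambda>b. f (a, b)) has_sum s a) (B a)"
  shows "(f has_sum sum s A) (Sigma A B)"
  using assms
proof (induction A rule: finite_induct)
  case (insert a A)
  have "(f has_sum s a) (Pair a ` B a)"
    using insert.prems by (subst has_sum_reindex) (auto simp: inj_on_def o_def)
  moreover have "(f has_sum sum s A) (Sigma A B)" using insert by simp
  moreover have "Sigma (insert a A) B = Pair a ` B a \<union> Sigma A B" by auto
  ultimately show ?case using insert.hyps by (auto intro: has_sum_Un_disjoint)
qed simp

lemma has_sum_bool_bool_slices:
  fixes f :: "bool \<times> bool \<times> 'w \<Rightarrow> real"
  assumes "\<And>a b. ((\<lambda>w. f (a, b, w)) has_sum s a b) UNIV"
  shows "(f has_sum (\<Sum>a\<in>UNIV. \<Sum>b\<in>UNIV. s a b)) UNIV"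
proof -
  have "((\<lambda>bw. f (a, bw)) has_sum (\<Sum>b\<in>UNIV. s a b)) (UNIV \<times> UNIV)" for a
    using assms by (intro has_sum_Sigma_finite) auto
  then have "(f has_sum (\<Sum>a\<in>UNIV. \<Sum>b\<in>UNIV. s a b)) (UNIV \<times> UNIV)"
    by (intro has_sum_Sigma_finite) auto
  then show ?thesis by simp
qed

lemma dTV_agreement_has_sum:
  fixes J :: "bool \<times> bool \<times> 'w list \<Rightarrow> real"
  assumes nonneg: "\<And>z. 0 \<le> J z" and total: "(marg_W J has_sum 1) UNIV"
  shows "((\<lambda>w. \<Sum>a\<in>UNIV. \<Sum>b\<in>UNIV. \<bar>J (a, b, w) - unif_agree (a, b) * marg_W J w\<bar>)
      has_sum 2 * dTV J (\<lambda>(a, b, w). unif_agree (a, b) * marg_W J w)) UNIV"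
proof -
  define D where "D z = \<bar>J z - (\<lambda>(a, b, w). unif_agree (a, b) * marg_W J w) z\<bar>" for z
  define s where "s a b = infsum (\<lambda>w. D (a, b, w)) UNIV" for a b
  have J_le: "J (a, b, w) \<le> marg_W J w" for a b w
    using nonneg by (cases a; cases b) (simp_all add: marg_W_def UNIV_bool)
  have D_le: "D (a, b, w) \<le> 2 * marg_W J w" for a b w
    using nonneg[of "(a, b, w)"] J_le[of a b w] by (auto simp: D_def unif_agree_def)
  have "(\<lambda>w. 2 * marg_W J w) summable_on UNIV"
    using has_sum_cmult_right[OF total] by (rule has_sum_imp_summable)
  then have "(\<lambda>w. D (a, b, w)) summable_on UNIV" for a b
    by (rule summable_on_comparison_test) (simp_all add: D_le, simp add: D_def)
  then have s: "((\<lambda>w. D (a, b, w)) has_sum s a b) UNIV" for a b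
    by (simp add: s_def has_sum_infsum)
  then have "(D has_sum (\<Sum>a\<in>UNIV. \<Sum>b\<in>UNIV. s a b)) UNIV"
    by (rule has_sum_bool_bool_slices)
  then have "2 * dTV J (\<lambda>(a, b, w). unif_agree (a, b) * marg_W J w) = (\<Sum>a\<in>UNIV. \<Sum>b\<in>UNIV. s a b)"
    unfolding dTV_def D_def by (simp add: infsumI)
  moreover have "((\<lambda>w. \<Sum>a\<in>UNIV. \<Sum>b\<in>UNIV. D (a, b, w)) has_sum (\<Sum>a\<in>UNIV. \<Sum>b\<in>UNIV. s a b)) UNIV"
    by (simp add: UNIV_bool) (intro has_sum_add s)
  ultimately show ?thesis by (simp add: D_def)
qed

lemma dTV_agreement_lower_bound:
  fixes J :: "bool \<times> bool \<times> 'w list \<Rightarrow> real"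
    and P :: "bool \<Rightarrow> bool \<Rightarrow> 'w list \<Rightarrow> real" and U V :: "bool \<Rightarrow> 'w list \<Rightarrow> real"
  assumes nonneg: "\<And>a b w. 0 \<le> P a b w" "\<And>a w. 0 \<le> U a w" "\<And>b w. 0 \<le> V b w"
    and J: "\<And>a b w. J (a, b, w) = P a b w / 8 + 7/8 * (U a w * V b w)"
    and total: "(marg_W J has_sum 1) UNIV"
    and diag_le_1: "\<And>F. finite F \<Longrightarrow> (\<Sum>w\<in>F. \<Sum>a\<in>UNIV. \<Sum>b\<in>UNIV. P a b w) \<le> 1"
  shows "sqrt 2 - 1 - 1/4 \<le> dTV J (\<lambda>(a, b, w). unif_agree (a, b) * marg_W J w)"
proof -
  define Pw where "Pw w = (\<Sum>a\<in>UNIV. \<Sum>b\<in>UNIV. P a b w)" for w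
  define T where "T w = sum (\<lambda>a. U a w) UNIV * sum (\<lambda>b. V b w) UNIV" for w
  define Ptotal where "Ptotal = infsum Pw UNIV"
  define k where "k = 2 * sqrt 2 - 2"
  have marg: "marg_W J w = Pw w / 8 + 7/8 * T w" for w
    by (simp add: marg_W_def J Pw_def T_def UNIV_bool algebra_simps)
  have Pw_le: "sum Pw F \<le> 1" if "finite F" for F using diag_le_1[OF that] by (simp add: Pw_def)
  have "Pw summable_on UNIV"
    using Pw_le nonneg(1) by (intro nonneg_bdd_above_summable_on bdd_aboveI) (auto simp: Pw_def sum_nonneg)
  then have Pw_sum: "(Pw has_sum Ptotal) UNIV" and "Ptotal \<le> 1"
    using Pw_le by (simp_all add: Ptotal_def has_sum_infsum infsum_le_finite_sums)
  have "T = (\<lambda>w. 8/7 * marg_W J w + (-1/7) * Pw w)" unfolding marg by (simp add: field_simps)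
  then have T_sum: "(T has_sum (8 - Ptotal) / 7) UNIV"
    using has_sum_add[OF has_sum_cmult_right[OF total, of "8/7"] has_sum_cmult_right[OF Pw_sum, of "-1/7"]]
    by (simp add: diff_divide_distrib)
  have lower_sum: "((\<lambda>w. 7/8 * k * T w + (-1/4) * Pw w)
      has_sum (7/8 * k * ((8 - Ptotal) / 7) + (-1/4) * Ptotal)) UNIV"
    by (intro has_sum_add has_sum_cmult_right T_sum Pw_sum)
  have lower: "7/8 * k * T w + (-1/4) * Pw w
      \<le> (\<Sum>a\<in>UNIV. \<Sum>b\<in>UNIV. \<bar>J (a, b, w) - unif_agree (a, b) * marg_W J w\<bar>)" for w
    using mixture_far_from_agreement[of "\<lambda>a b. P a b w" "\<lambda>a. U a w" "\<lambda>b. V b w"] nonneg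
    by (simp add: J k_def T_def Pw_def marg_W_def)
  have "J z \<ge> 0" for z using nonneg by (cases z) (simp add: J)
  then have "7/8 * k * ((8 - Ptotal) / 7) + (-1/4) * Ptotal
      \<le> 2 * dTV J (\<lambda>(a, b, w). unif_agree (a, b) * marg_W J w)"
    using lower_sum dTV_agreement_has_sum total lower by (blast intro: has_sum_mono)
  moreover have "7/8 * k * ((8 - Ptotal) / 7) + (-1/4) * Ptotal = k - (k/8 + 1/4) * Ptotal"
    by (simp add: field_simps)
  moreover have "(k/8 + 1/4) * Ptotal \<le> k/8 + 1/4"
    using \<open>Ptotal \<le> 1\<close> by (intro mult_left_le) (simp_all add: k_def)
  ultimately show ?thesis using sqrt2_less_2 k_def by linarith
qed

theorem mainTheorem7:
  fixes m :: nat
    and ka kb :: "nat \<Rightarrow> 'w list \<Rightarrow> 'w pmf"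
    and st :: "'w list \<Rightarrow> bool"
    and oa ob :: "nat \<Rightarrow> 'w list \<Rightarrow> bool pmf"
  assumes "m > 0"
    and "\<And>x h. finite (set_pmf (ka x h))"
    and "\<And>y h. finite (set_pmf (kb y h))"
    and "(marg_W (joint_ABW (src_pmf m) ka kb st oa ob) has_sum 1) UNIV"
  shows "dTV (joint_ABW (src_pmf m) ka kb st oa ob)
             (\<lambda>(a, b, w). unif_agree (a, b) * marg_W (joint_ABW (src_pmf m) ka kb st oa ob) w)
           \<ge> sqrt 2 - 1 - 1/4"
proof (rule joint_ABW_src_decomposition[where m = m and ka = ka and kb = kb and st = st
      and oa = oa and ob = ob])
  fix P :: "bool \<Rightarrow> bool \<Rightarrow> 'w list \<Rightarrow> real" and U V :: "bool \<Rightarrow> 'w list \<Rightarrow> real"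
  assume "\<And>a b w. 0 \<le> P a b w" "\<And>a w. 0 \<le> U a w" "\<And>b w. 0 \<le> V b w"
    and "\<And>a b w. joint_ABW (src_pmf m) ka kb st oa ob (a, b, w) = P a b w / 8 + 7/8 * (U a w * V b w)"
    and "\<And>F. finite F \<Longrightarrow> (\<Sum>w\<in>F. \<Sum>a\<in>UNIV. \<Sum>b\<in>UNIV. P a b w) \<le> 1"
  then show ?thesis
    using assms(4) by (intro dTV_agreement_lower_bound) auto
qed

end
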